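(* Let $X$ be a real Hilbert space and let $T_1,T_2,T_3\colon X\to X$ be $\sigma_1$-, $\sigma_2$-, and $\sigma_3$-cocoercive, respectively. Let $\eta,\nu,\lambda,\delta>0$, set $S:=-\nu\mathrm{Id}+\lambda T_1-\delta T_3T_1$ and $T:=\mathrm{Id}-\eta T_1+\eta T_2S$. Suppose $\operatorname{Fix}T\neq\varnothing$ and that either (a) $\lambda=2\nu\sigma_1=2\sigma_2$ and $\eta<\eta^*:=\frac{1}{\nu}\big(\lambda-\frac{\delta}{2\sigma_3}\big)$; or (b) $\lambda<\nu\sigma_1+\sigma_2$ and $\eta<\eta^*:=\frac1\nu\Big(\frac{(2\nu\sigma_1-\lambda)(2\sigma_2-\lambda)}{2(\nu\sigma_1+\sigma_2-\lambda)}+\lambda-\frac{\delta}{2\sigma_3}\Big)$. Let $x_0\in X$ and $x_{n+1}:=Tx_n$ for all $n\in\mathbb N$. Then: (i) $T$ is $\frac{\eta}{\eta^*}$-averaged; $(x_n)$ converges weakly to some $x^*\in\operatorname{Fix}T$, and $\|x_n-Tx_n\|=o(1/\sqrt n)$ as $n\to\infty$. (ii) $(T_3T_1x_n)$ converges strongly to $T_3T_1x^*$, and $T_3T_1(\operatorname{Fix}T)=\{T_3T_1x^*\}$. (iii) If (a) holds and $\nu=\lambda-1$, then $(T_1x_n)$ and $(T_2Sx_n)$ converge weakly to $T_1x^*=T_2Sx^*$. (iv) If (b) holds, then $(T_1x_n)$ and $(T_2Sx_n)$ converge strongly to $T_1x^*=T_2Sx^*$, and $T_1(\operatorname{Fi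x}T)=T_2S(\operatorname{Fix}T)=\{T_1x^*\}$.
   Context: An operator $T\colon X\to X$ is $\sigma$-cocoercive ($\sigma>0$) if $\langle x-y,Tx-Ty\rangle\ge\sigma\|Tx-Ty\|^2$ for all $x,y$. $T$ is $\theta$-averaged for $\theta\in(0,1)$ if $T=(1-\theta)\mathrm{Id}+\theta N$ with $N$ nonexpansive. $\operatorname{Fix}T=\{x:Tx=x\}$. *)

theory Defs
  imports "HOL-Analysis.Analysis" "HOL-Library.Landau_Symbols"
begin

text \<open>Operators on a real Hilbert space: the type class combination
  real_inner + complete_space.\<close>

definition cocoercive :: "real \<Rightarrow> ('a::real_inner \<Rightarrow> 'a) \<Rightarrow> bool" where
  "cocoercive \<sigma> T \<longleftrightarrow> \<sigma> > 0 \<and>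
     (\<forall>x y. inner (x - y) (T x - T y) \<ge> \<sigma> * (norm (T x - T y))\<^sup>2)"

definition nonexpansive :: "('a::real_normed_vector \<Rightarrow> 'a) \<Rightarrow> bool" where
  "nonexpansive N \<longleftrightarrow> (\<forall>x y. norm (N x - N y) \<le> norm (x - y))"

definition averaged :: "real \<Rightarrow> ('a::real_normed_vector \<Rightarrow> 'a) \<Rightarrow> bool" where
  "averaged \<theta> T \<longleftrightarrow> 0 < \<theta> \<and> \<theta> < 1 \<and>
     (\<exists>N. nonexpansive N \<and> (\<forall>x. T x = (1 - \<theta>) *\<^sub>R x + \<theta> *\<^sub>R N x))"

definition Fix :: "('a \<Rightarrow> 'a) \<Rightarrow> 'a set" where
  "Fix T = {x. T x = x}"

definition weakly_converges :: "(nat \<Rightarrow> 'a::real_inner) \<Rightarrow> 'a \<Rightarrow> bool" where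
  "weakly_converges x l \<longleftrightarrow> (\<forall>y. (\<lambda>n. inner (x n) y) \<longlonglongrightarrow> inner l y)"

end

theory Submission
  imports Defs "HOL-Library.Diagonal_Subsequence" "HOL-Library.Infinite_Set"
begin

text \<open>Write T = Id - \<eta> R with R = T1 - T2 \<circ> S. For the step bound \<eta>s of either regime, the
  slacks of the cocoercivity inequalities of T1, T2 and T3 add up to (\<nu> \<eta>s / 2) |Ru - Rv|^2 plus
  nonnegative squares. Hence R is (\<eta>s/2)-cocoercive, T is (\<eta>/\<eta>s)-averaged, and the iterates are
  Fejer monotone with respect to Fix T with summable |R x_n|^2 and summable squares. Opial's
  argument gives weak convergence (weak sequential compactness comes from a Riesz representation
  on the closed span of a bounded sequence); monotonicity of |x_n - T x_n| turns summability into
  the o(1/sqrt n) rate; the vanishing squares give the strong limits, and since they vanish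
  identically on Fix T, T3 T1 (and in regime (b) also T1 and T2 S) is constant there. In regime (a)
  the quadratic parts of the T1 and T2 slacks cancel, so these slacks pass to weak limits, which
  identifies the weak limit of T1 x_n.\<close>

section \<open>Weak convergence in Hilbert spaces\<close>

lemma subspace_closure:
  fixes V :: "'a::real_normed_vector set"
  assumes "subspace V"
  shows "subspace (closure V)"
  unfolding subspace_def
proof (intro conjI ballI allI)
  show "0 \<in> closure V"
    using assms closure_subset subspace_0 by blast
next
  fix x y assume "x \<in> closure V" "y \<in> closure V"
  then obtain f g where f: "\<And>n. f n \<in> V" "f \<longlonglongrightarrow> x" and g: "\<And>n. g n \<in> V" "g \<longlonglongrightarrow> y"
    by (meson closure_sequential)
  have "(\<lambda>n. f n + g n) \<longlonglongrightarrow> x + y" "\<And>n. f n + g n \<in> V"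
    using f g assms by (auto intro: tendsto_add simp: subspace_add)
  then show "x + y \<in> closure V"
    by (meson closure_sequential)
next
  fix c :: real and x assume "x \<in> closure V"
  then obtain f where f: "\<And>n. f n \<in> V" "f \<longlonglongrightarrow> x"
    by (meson closure_sequential)
  have "(\<lambda>n. c *\<^sub>R f n) \<longlonglongrightarrow> c *\<^sub>R x" "\<And>n. c *\<^sub>R f n \<in> V"
    using f assms by (auto intro: tendsto_scaleR simp: subspace_scale)
  then show "c *\<^sub>R x \<in> closure V"
    by (meson closure_sequential)
qed

lemma linear_coeff_zero_if_quadratic_nonneg:
  fixes a b :: real
  assumes "b \<ge> 0" and nonneg: "\<And>t. a * t + b * t\<^sup>2 \<ge> 0"
  shows "a = 0"
proof -
  define u where "u = 2 * b + 1"
  have "u > 0"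
    using assms(1) unfolding u_def by simp
  define t where "t = - a / u"
  have "t * u = - a"
    unfolding t_def using \<open>u > 0\<close> by simp
  have "u\<^sup>2 * (a * t + b * t\<^sup>2) = a * u * (t * u) + b * (t * u)\<^sup>2"
    by (simp add: power2_eq_square algebra_simps)
  also have "\<dots> = a * u * (- a) + b * (- a)\<^sup>2"
    unfolding \<open>t * u = - a\<close> ..
  also have "\<dots> = - (a\<^sup>2 * (b + 1))"
    unfolding u_def by (simp add: power2_eq_square algebra_simps)
  finally have "a\<^sup>2 * (b + 1) \<le> 0"
    using nonneg[of t] by (smt (verit) zero_le_mult_iff zero_le_power2)
  then show ?thesis
    using assms(1) by (simp add: mult_le_0_iff)
qed

lemma norm_midpoint_sq:
  fixes v w :: "'a::real_inner"
  shows "(norm ((1/2) *\<^sub>R (v + w)))\<^sup>2 = (norm v)\<^sup>2 / 2 + (norm w)\<^sup>2 / 2 - (norm (v - w))\<^sup>2 / 4"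
  by (simp add: power2_norm_eq_inner inner_add_left inner_add_right inner_diff_left
      inner_diff_right inner_commute algebra_simps; simp add: field_simps)

lemma exists_minimizing_sequence:
  fixes \<Phi> :: "'a \<Rightarrow> real"
  assumes "bdd_below (\<Phi> ` V)" "V \<noteq> {}"
  shows "\<exists>f. (\<forall>k. f k \<in> V) \<and> (\<forall>k. \<Phi> (f k) < Inf (\<Phi> ` V) + 1 / real (Suc k))"
proof -
  have "\<exists>v\<in>V. \<Phi> v < Inf (\<Phi> ` V) + 1 / real (Suc k)" for k
    using cInf_less_iff[of "\<Phi> ` V" "Inf (\<Phi> ` V) + 1 / real (Suc k)"] assms by auto
  then show ?thesis
    by metis
qed

lemma minimizing_sequence_Cauchy:
  fixes f :: "nat \<Rightarrow> 'a::real_normed_vector" and \<Phi> :: "'a \<Rightarrow> real"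
  assumes f: "\<And>k. f k \<in> V" "\<And>k. \<Phi> (f k) < m + 1 / real (Suc k)"
    and parallelogram: "\<And>v w. v \<in> V \<Longrightarrow> w \<in> V \<Longrightarrow> (norm (v - w))\<^sup>2 \<le> 4 * \<Phi> v + 4 * \<Phi> w - 8 * m"
  shows "Cauchy f"
proof (rule metric_CauchyI)
  fix e :: real assume "e > 0"
  then obtain N where N: "1 / real (Suc N) < e\<^sup>2 / 8"
    by (metis divide_pos_pos nat_approx_posE zero_less_numeral zero_less_power)
  have "dist (f i) (f j) < e" if "N \<le> i" "N \<le> j" for i j
  proof -
    have "1 / real (Suc i) \<le> 1 / real (Suc N)" "1 / real (Suc j) \<le> 1 / real (Suc N)"
      using that by (simp_all add: frac_le)
    then have "(norm (f i - f j))\<^sup>2 < e\<^sup>2"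
      using parallelogram[OF f(1) f(1), of i j] f(2)[of i] f(2)[of j] N by linarith
    then show ?thesis
      using \<open>e > 0\<close> by (simp add: dist_norm power_less_imp_less_base)
  qed
  then show "\<exists>M. \<forall>i\<ge>M. \<forall>j\<ge>M. dist (f i) (f j) < e"
    by blast
qed

lemma closed_subspace_energy_minimizer:
  fixes V :: "'a::{real_inner,complete_space} set" and L :: "'a \<Rightarrow> real"
  assumes sub: "subspace V" and cl: "closed V"
    and add: "\<And>v w. v \<in> V \<Longrightarrow> w \<in> V \<Longrightarrow> L (v + w) = L v + L w"
    and scal: "\<And>c v. v \<in> V \<Longrightarrow> L (c *\<^sub>R v) = c * L v"
    and bnd: "\<And>v. v \<in> V \<Longrightarrow> \<bar>L v\<bar> \<le> K * norm v"
  shows "\<exists>x\<in>V. \<forall>v\<in>V. (norm x)\<^sup>2 / 2 - L x \<le> (norm v)\<^sup>2 / 2 - L v"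
proof -
  define \<Phi> where "\<Phi> v = (norm v)\<^sup>2 / 2 - L v" for v
  have L_diff: "L (v - w) = L v - L w" if "v \<in> V" "w \<in> V" for v w
    using add[of v "- w"] scal[of w "- 1"] that sub by (simp add: subspace_neg)
  have "\<Phi> v \<ge> - (K\<^sup>2) / 2" if "v \<in> V" for v
  proof -
    have "L v \<le> \<bar>K\<bar> * norm v"
      using bnd[OF that] abs_ge_self[of K] mult_right_mono[of K "\<bar>K\<bar>" "norm v"] by simp
    moreover have "(norm v - \<bar>K\<bar>)\<^sup>2 \<ge> 0"
      by simp
    ultimately show ?thesis
      unfolding \<Phi>_def by (simp add: power2_eq_square algebra_simps)
  qed
  then have bdd: "bdd_below (\<Phi> ` V)"
    by (meson bdd_belowI2)
  define m where "m = Inf (\<Phi> ` V)"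
  have m_le: "m \<le> \<Phi> v" if "v \<in> V" for v
    unfolding m_def using bdd that by (simp add: cInf_lower)
  obtain f where f: "\<And>k. f k \<in> V" "\<And>k. \<Phi> (f k) < m + 1 / real (Suc k)"
    using exists_minimizing_sequence[OF bdd] subspace_0[OF sub] unfolding m_def by blast
  have parallelogram: "(norm (v - w))\<^sup>2 \<le> 4 * \<Phi> v + 4 * \<Phi> w - 8 * m" if "v \<in> V" "w \<in> V" for v w
  proof -
    have "v + w \<in> V" "(1/2) *\<^sub>R (v + w) \<in> V"
      using that sub by (simp_all add: subspace_add subspace_scale)
    then have "\<Phi> ((1/2) *\<^sub>R (v + w)) = \<Phi> v / 2 + \<Phi> w / 2 - (norm (v - w))\<^sup>2 / 8"
      using scal[of "v + w" "1/2"] add[OF that] norm_midpoint_sq[of v w]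
      unfolding \<Phi>_def by (simp add: field_simps)
    with m_le[OF \<open>(1/2) *\<^sub>R (v + w) \<in> V\<close>] show ?thesis
      by linarith
  qed
  have "Cauchy f"
    by (rule minimizing_sequence_Cauchy[of f V \<Phi> m, OF f parallelogram])
  then obtain x where x: "f \<longlonglongrightarrow> x"
    using Cauchy_convergent convergent_def by blast
  have "x \<in> V"
    using closed_sequentially[OF cl f(1) x] .
  have "(\<lambda>k. L (f k) - L x) \<longlonglongrightarrow> 0"
  proof (rule Lim_null_comparison)
    show "\<forall>\<^sub>F k in sequentially. norm (L (f k) - L x) \<le> K * norm (f k - x)"
      using bnd[of "f _ - x"] L_diff f(1) \<open>x \<in> V\<close> sub by (simp add: subspace_diff)
    show "(\<lambda>k. K * norm (f k - x)) \<longlonglongrightarrow> 0"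
      using x by (simp add: LIM_zero_iff tendsto_norm_zero tendsto_mult_right_zero)
  qed
  then have "(\<lambda>k. L (f k)) \<longlonglongrightarrow> L x"
    by (rule LIM_zero_cancel)
  then have "(\<lambda>k. \<Phi> (f k)) \<longlonglongrightarrow> \<Phi> x"
    unfolding \<Phi>_def by (intro tendsto_intros x) simp
  moreover have "(\<lambda>k. m + 1 / real (Suc k)) \<longlonglongrightarrow> m"
    using tendsto_add[OF tendsto_const LIMSEQ_Suc[OF lim_inverse_n']] by simp
  ultimately have "\<Phi> x \<le> m"
    using f(2) by (meson LIMSEQ_le less_imp_le)
  then show ?thesis
    using \<open>x \<in> V\<close> m_le unfolding \<Phi>_def by force
qed

lemma riesz_representation_closed_subspace:
  fixes V :: "'a::{real_inner,complete_space} set" and L :: "'a \<Rightarrow> real"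
  assumes sub: "subspace V" and cl: "closed V"
    and add: "\<And>v w. v \<in> V \<Longrightarrow> w \<in> V \<Longrightarrow> L (v + w) = L v + L w"
    and scal: "\<And>c v. v \<in> V \<Longrightarrow> L (c *\<^sub>R v) = c * L v"
    and bnd: "\<And>v. v \<in> V \<Longrightarrow> \<bar>L v\<bar> \<le> K * norm v"
  shows "\<exists>x\<in>V. \<forall>v\<in>V. L v = inner x v"
proof -
  obtain x where "x \<in> V" and min: "\<And>v. v \<in> V \<Longrightarrow> (norm x)\<^sup>2 / 2 - L x \<le> (norm v)\<^sup>2 / 2 - L v"
    using closed_subspace_energy_minimizer[OF assms] by blast
  have "L v = inner x v" if "v \<in> V" for v
  proof -
    have "(inner x v - L v) * t + ((norm v)\<^sup>2 / 2) * t\<^sup>2 \<ge> 0" for t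
    proof -
      have "x + t *\<^sub>R v \<in> V" "L (x + t *\<^sub>R v) = L x + t * L v"
        using \<open>x \<in> V\<close> that sub add scal by (simp_all add: subspace_add subspace_scale)
      moreover have "(norm (x + t *\<^sub>R v))\<^sup>2 = (norm x)\<^sup>2 + 2 * t * inner x v + t\<^sup>2 * (norm v)\<^sup>2"
        by (simp add: power2_norm_eq_inner inner_add_left inner_add_right inner_commute
            algebra_simps) (simp add: power2_eq_square)
      ultimately show ?thesis
        using min[of "x + t *\<^sub>R v"] by (simp add: algebra_simps)
    qed
    from linear_coeff_zero_if_quadratic_nonneg[OF _ this] show ?thesis
      by simp
  qed
  then show ?thesis
    using \<open>x \<in> V\<close> by blast
qed

lemma convergent_if_uniform_approx:
  fixes f :: "nat \<Rightarrow> real"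
  assumes "\<And>e. e > 0 \<Longrightarrow> \<exists>g. convergent g \<and> (\<forall>i. \<bar>f i - g i\<bar> \<le> e)"
  shows "convergent f"
proof -
  have "Cauchy f"
  proof (rule metric_CauchyI)
    fix e :: real assume "e > 0"
    then obtain g where g: "convergent g" "\<And>i. \<bar>f i - g i\<bar> \<le> e / 3"
      using assms[of "e / 3"] by auto
    then obtain M where M: "\<And>i j. i \<ge> M \<Longrightarrow> j \<ge> M \<Longrightarrow> dist (g i) (g j) < e / 3"
      using \<open>e > 0\<close> Cauchy_convergent_iff
      by (metis metric_CauchyD zero_less_divide_iff zero_less_numeral)
    have "dist (f i) (f j) < e" if "M \<le> i" "M \<le> j" for i j
      using M[OF that] g(2)[of i] g(2)[of j] unfolding dist_real_def by arith
    then show "\<exists>M. \<forall>i\<ge>M. \<forall>j\<ge>M. dist (f i) (f j) < e"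
      by blast
  qed
  then show ?thesis
    using Cauchy_convergent_iff by blast
qed

lemma diagonal_subseq_inner_convergent:
  fixes x :: "nat \<Rightarrow> 'a::real_inner"
  assumes bd: "\<And>n. norm (x n) \<le> M"
  shows "\<exists>d. strict_mono d \<and> (\<forall>k. convergent (\<lambda>i. inner (x (d i)) (x k)))"
proof -
  define P where "P k s \<longleftrightarrow> convergent (\<lambda>i. inner (x (s i)) (x k))" for k and s :: "nat \<Rightarrow> nat"
  have "M \<ge> 0"
    using order.trans[OF norm_ge_zero bd[of 0]] .
  have sub: "subseqs P"
    unfolding subseqs_def
  proof (intro allI impI)
    fix k and s :: "nat \<Rightarrow> nat"
    obtain r where r: "strict_mono r" "monoseq (\<lambda>n. inner (x (s (r n))) (x k))"
      using seq_monosub[of "\<lambda>i. inner (x (s i)) (x k)"] by auto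
    have "\<bar>inner (x (s (r n))) (x k)\<bar> \<le> M * M" for n
      using Cauchy_Schwarz_ineq2 mult_mono[OF bd bd \<open>M \<ge> 0\<close> norm_ge_zero] order.trans by blast
    then have "Bseq (\<lambda>n. inner (x (s (r n))) (x k))"
      by (intro BseqI') simp
    then have "P k (s \<circ> r)"
      using r(2) Bseq_monoseq_convergent unfolding P_def o_def by blast
    then show "\<exists>r. strict_mono r \<and> P k (s \<circ> r)"
      using r(1) by blast
  qed
  define d where "d = subseqs.diagseq P"
  have "convergent (\<lambda>i. inner (x (d i)) (x k))" for k
  proof -
    have "P k (d \<circ> (+) (Suc k))"
      unfolding d_def
    proof (rule subseqs.diagseq_holds[OF sub])
      fix r s n assume "strict_mono (r :: nat \<Rightarrow> nat)" "P n s"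
      then show "P n (s \<circ> r)"
        unfolding P_def convergent_def using LIMSEQ_subseq_LIMSEQ by (fastforce simp: o_def)
    qed
    then obtain l where "(\<lambda>i. inner (x (d (i + Suc k))) (x k)) \<longlonglongrightarrow> l"
      unfolding P_def convergent_def by (auto simp: ac_simps)
    then show ?thesis
      unfolding convergent_def using LIMSEQ_offset[of "\<lambda>i. inner (x (d i)) (x k)"] by blast
  qed
  moreover have "strict_mono d"
    unfolding d_def using subseqs.subseq_diagseq[OF sub] .
  ultimately show ?thesis
    by blast
qed

lemma inner_convergent_on_closure_span:
  fixes y :: "nat \<Rightarrow> 'a::real_inner"
  assumes bd: "\<And>i. norm (y i) \<le> M" and conv: "\<And>j. convergent (\<lambda>i. inner (y i) (y j))"
    and v: "v \<in> closure (span (range y))"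
  shows "convergent (\<lambda>i. inner (y i) v)"
proof -
  have conv_span: "convergent (\<lambda>i. inner (y i) w)" if "w \<in> span (range y)" for w
    using that
  proof (rule span_induct)
    show "subspace {w. convergent (\<lambda>i. inner (y i) w)}"
      unfolding subspace_def
      by (simp add: inner_add_right convergent_add convergent_const convergent_mult)
  qed (use conv in auto)
  have "M \<ge> 0"
    using order.trans[OF norm_ge_zero bd[of 0]] .
  show ?thesis
  proof (rule convergent_if_uniform_approx)
    fix e :: real assume "e > 0"
    then have "e / (M + 1) > 0"
      using \<open>M \<ge> 0\<close> by simp
    then obtain w where w: "w \<in> span (range y)" "dist w v < e / (M + 1)"
      using v unfolding closure_approachable by blast
    have "\<bar>inner (y i) v - inner (y i) w\<bar> \<le> e" for i
    proof -
      have "\<bar>inner (y i) v - inner (y i) w\<bar> \<le> norm (y i) * norm (v - w)"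
        using Cauchy_Schwarz_ineq2 by (metis inner_diff_right)
      also have "\<dots> \<le> (M + 1) * (e / (M + 1))"
        using bd[of i] w(2) \<open>M \<ge> 0\<close> by (intro mult_mono) (auto simp: dist_norm norm_minus_commute)
      finally show ?thesis
        using \<open>M \<ge> 0\<close> by simp
    qed
    then show "\<exists>g. convergent g \<and> (\<forall>i. \<bar>inner (y i) v - g i\<bar> \<le> e)"
      using conv_span[OF w(1)] by blast
  qed
qed

lemma inner_limit_representation:
  fixes y :: "nat \<Rightarrow> 'a::{real_inner,complete_space}"
  assumes V: "subspace V" "closed V" and bd: "\<And>i. norm (y i) \<le> M"
    and L: "\<And>v. v \<in> V \<Longrightarrow> (\<lambda>i. inner (y i) v) \<longlonglongrightarrow> L v"
  shows "\<exists>l\<in>V. \<forall>v\<in>V. L v = inner l v"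
proof (rule riesz_representation_closed_subspace[OF V, where K = M])
  fix v w assume "v \<in> V" "w \<in> V"
  then have "(\<lambda>i. inner (y i) (v + w)) \<longlonglongrightarrow> L v + L w"
    using tendsto_add[OF L L] by (simp add: inner_add_right)
  moreover have "v + w \<in> V"
    using \<open>v \<in> V\<close> \<open>w \<in> V\<close> V(1) by (simp add: subspace_add)
  ultimately show "L (v + w) = L v + L w"
    using L LIMSEQ_unique by blast
next
  fix c v assume "v \<in> V"
  then have "(\<lambda>i. inner (y i) (c *\<^sub>R v)) \<longlonglongrightarrow> c * L v"
    using tendsto_mult[OF tendsto_const L] by simp
  moreover have "c *\<^sub>R v \<in> V"
    using \<open>v \<in> V\<close> V(1) by (simp add: subspace_scale)
  ultimately show "L (c *\<^sub>R v) = c * L v"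
    using L LIMSEQ_unique by blast
next
  fix v assume "v \<in> V"
  have "\<bar>inner (y i) v\<bar> \<le> M * norm v" for i
    using Cauchy_Schwarz_ineq2[of "y i" v] bd[of i]
    by (meson mult_right_mono norm_ge_zero order.trans)
  then show "\<bar>L v\<bar> \<le> M * norm v"
    using LIMSEQ_le_const2[OF tendsto_rabs[OF L[OF \<open>v \<in> V\<close>]]] by blast
qed

lemma weakly_convergent_if_inner_convergent:
  fixes y :: "nat \<Rightarrow> 'a::{real_inner,complete_space}"
  assumes bd: "\<And>i. norm (y i) \<le> M" and conv: "\<And>j. convergent (\<lambda>i. inner (y i) (y j))"
  shows "\<exists>l. weakly_converges y l"
proof -
  define V where "V = closure (span (range y))"
  have V: "subspace V" "closed V"
    unfolding V_def by (simp_all add: subspace_closure)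
  have yV: "y i \<in> V" for i
    unfolding V_def by (meson closure_subset rangeI span_base subsetD)
  define L where "L v = lim (\<lambda>i. inner (y i) v)" for v
  have L: "(\<lambda>i. inner (y i) v) \<longlonglongrightarrow> L v" if "v \<in> V" for v
    using inner_convergent_on_closure_span[of y M, OF bd conv] that
    unfolding L_def V_def convergent_LIMSEQ_iff by blast
  obtain l where "l \<in> V" and l: "\<And>v. v \<in> V \<Longrightarrow> L v = inner l v"
    using inner_limit_representation[of V y M L, OF V bd L] by blast
  have "(\<lambda>i. inner (y i) z) \<longlonglongrightarrow> inner l z" for z
  proof -
    \<comment> \<open>Replace z by the element p of V representing inner z on V.\<close>
    have "\<exists>p\<in>V. \<forall>v\<in>V. inner z v = inner p v"
      by (rule riesz_representation_closed_subspace[OF V, where K = "norm z"])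
        (simp_all add: inner_add_right Cauchy_Schwarz_ineq2)
    then obtain p where "p \<in> V" and p: "\<And>v. v \<in> V \<Longrightarrow> inner z v = inner p v"
      by blast
    have "inner (y i) p = inner (y i) z" for i
      using p[OF yV[of i]] by (simp add: inner_commute)
    moreover have "L p = inner l z"
      using l[OF \<open>p \<in> V\<close>] p[OF \<open>l \<in> V\<close>] by (simp add: inner_commute)
    ultimately show ?thesis
      using L[OF \<open>p \<in> V\<close>] by simp
  qed
  then show ?thesis
    unfolding weakly_converges_def by blast
qed

lemma weakly_convergent_subseq:
  fixes x :: "nat \<Rightarrow> 'a::{real_inner,complete_space}"
  assumes bd: "\<And>n. norm (x n) \<le> M"
  shows "\<exists>\<phi> l. strict_mono \<phi> \<and> weakly_converges (x \<circ> \<phi>) l"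
proof -
  obtain d where d: "strict_mono d" "\<And>k. convergent (\<lambda>i. inner (x (d i)) (x k))"
    using diagonal_subseq_inner_convergent[of x M] bd by blast
  have "\<exists>l. weakly_converges (x \<circ> d) l"
  proof (rule weakly_convergent_if_inner_convergent)
    show "norm ((x \<circ> d) i) \<le> M" for i
      using bd by simp
    show "convergent (\<lambda>i. inner ((x \<circ> d) i) ((x \<circ> d) j))" for j
      using d(2)[of "d j"] by simp
  qed
  then show ?thesis
    using d(1) by blast
qed

lemma weakly_converges_if_subseq_limits_unique:
  fixes x :: "nat \<Rightarrow> 'a::{real_inner,complete_space}"
  assumes bd: "\<And>n. norm (x n) \<le> M"
    and unique: "\<And>\<phi> l. strict_mono \<phi> \<Longrightarrow> weakly_converges (x \<circ> \<phi>) l \<Longrightarrow> l = p"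
  shows "weakly_converges x p"
  unfolding weakly_converges_def
proof (rule allI, rule ccontr)
  fix y assume "\<not> (\<lambda>n. inner (x n) y) \<longlonglongrightarrow> inner p y"
  then obtain e where "e > 0" and e: "\<And>N. \<exists>n\<ge>N. e \<le> \<bar>inner (x n) y - inner p y\<bar>"
    unfolding LIMSEQ_iff by (auto simp: not_less)
  define A where "A = {n. e \<le> \<bar>inner (x n) y - inner p y\<bar>}"
  have "infinite A"
    unfolding infinite_nat_iff_unbounded_le A_def using e by auto
  then obtain \<psi> :: "nat \<Rightarrow> nat" where \<psi>: "strict_mono \<psi>" "\<And>k. \<psi> k \<in> A"
    using infinite_enumerate by metis
  have bd_\<psi>: "norm ((x \<circ> \<psi>) n) \<le> M" for n
    using bd by simp
  obtain \<phi> l where \<phi>: "strict_mono \<phi>" "weakly_converges (x \<circ> \<psi> \<circ> \<phi>) l"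
    using weakly_convergent_subseq[of "x \<circ> \<psi>" M, OF bd_\<psi>] by blast
  have "l = p"
    using unique[OF strict_mono_o[OF \<psi>(1) \<phi>(1)]] \<phi>(2) by (simp add: o_assoc)
  then have "(\<lambda>k. inner (x (\<psi> (\<phi> k))) y) \<longlonglongrightarrow> inner p y"
    using \<phi>(2) unfolding weakly_converges_def by auto
  then obtain k where "\<bar>inner (x (\<psi> (\<phi> k))) y - inner p y\<bar> < e"
    unfolding LIMSEQ_iff using \<open>e > 0\<close> by fastforce
  with \<psi>(2)[of "\<phi> k"] show False
    unfolding A_def by simp
qed

lemma weakly_converges_subseq:
  assumes "weakly_converges x l" "strict_mono \<phi>"
  shows "weakly_converges (x \<circ> \<phi>) l"
  using assms LIMSEQ_subseq_LIMSEQ unfolding weakly_converges_def o_def by fastforce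

lemma weakly_converges_diff_limit:
  assumes "weakly_converges x l"
  shows "weakly_converges (\<lambda>n. x n - l) 0"
  using assms unfolding weakly_converges_def by (simp add: inner_diff_left LIM_zero_iff)

lemma weakly_converges_diff_tendsto_zero:
  assumes "weakly_converges x l" "y \<longlonglongrightarrow> 0"
  shows "weakly_converges (\<lambda>n. x n - y n) l"
  unfolding weakly_converges_def
proof
  fix z
  have "(\<lambda>n. inner (x n) z) \<longlonglongrightarrow> inner l z"
    using assms(1) unfolding weakly_converges_def by blast
  from tendsto_diff[OF this tendsto_inner[OF assms(2) tendsto_const]]
  have "(\<lambda>n. inner (x n) z - inner (y n) z) \<longlonglongrightarrow> inner l z - inner 0 z" .
  then show "(\<lambda>n. inner (x n - y n) z) \<longlonglongrightarrow> inner l z"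
    by (simp add: inner_diff_left)
qed

lemma tendsto_zero_if_norm_sq_tendsto_zero:
  fixes f :: "nat \<Rightarrow> 'a::real_normed_vector"
  assumes "(\<lambda>n. (norm (f n))\<^sup>2) \<longlonglongrightarrow> 0"
  shows "f \<longlonglongrightarrow> 0"
  using tendsto_real_sqrt[OF assms] by (simp add: tendsto_norm_zero_iff)

lemma tendsto_zero_if_nonneg_scaled_le:
  fixes f g :: "nat \<Rightarrow> real"
  assumes "\<And>n. 0 \<le> f n" "\<And>n. c * f n \<le> g n" "c > 0" "g \<longlonglongrightarrow> 0"
  shows "f \<longlonglongrightarrow> 0"
proof (rule Lim_null_comparison)
  show "\<forall>\<^sub>F n in sequentially. norm (f n) \<le> g n / c"
    using assms(1-3) by (simp add: pos_le_divide_eq mult.commute)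
  show "(\<lambda>n. g n / c) \<longlonglongrightarrow> 0"
    using tendsto_divide_zero[OF assms(4)] .
qed

lemma bounded_inner_tendsto_zero:
  fixes f g :: "nat \<Rightarrow> 'a::real_inner"
  assumes "\<And>n. norm (f n) \<le> C" "g \<longlonglongrightarrow> 0"
  shows "(\<lambda>n. inner (f n) (g n)) \<longlonglongrightarrow> 0"
proof (rule Lim_null_comparison)
  have "norm (inner (f n) (g n)) \<le> C * norm (g n)" for n
    using Cauchy_Schwarz_ineq2[of "f n" "g n"] mult_right_mono[OF assms(1)[of n] norm_ge_zero[of "g n"]]
    by simp
  then show "\<forall>\<^sub>F n in sequentially. norm (inner (f n) (g n)) \<le> C * norm (g n)"
    by (simp add: always_eventually)
  show "(\<lambda>n. C * norm (g n)) \<longlonglongrightarrow> 0"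
    using assms(2) by (intro tendsto_mult_right_zero tendsto_norm_zero)
qed

section \<open>Iterates of nonexpansive maps\<close>

lemma nonexpansive_weak_limit_fixed:
  fixes z :: "nat \<Rightarrow> 'a::real_inner"
  assumes ne: "nonexpansive T" and bd: "\<And>n. norm (z n) \<le> M" and weak: "weakly_converges z l"
    and reg: "(\<lambda>n. norm (z n - T (z n))) \<longlonglongrightarrow> 0"
  shows "T l = l"
proof -
  define w where "w = l - T l"
  define e where "e n = norm (z n - T (z n))" for n
  define B where "B = M + norm l"
  have key: "(norm w)\<^sup>2 \<le> (e n)\<^sup>2 + 2 * B * e n - 2 * (inner (z n) w - inner l w)" for n
  proof -
    have "norm (z n - T l) \<le> norm (z n - T (z n)) + norm (T (z n) - T l)"
      using norm_triangle_ineq[of "z n - T (z n)" "T (z n) - T l"] by simp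
    also have "\<dots> \<le> e n + norm (z n - l)"
      using ne unfolding nonexpansive_def e_def by (simp add: add_left_mono)
    finally have "(norm (z n - T l))\<^sup>2 \<le> (e n + norm (z n - l))\<^sup>2"
      by (simp add: power_mono)
    moreover have "z n - T l = (z n - l) + w"
      unfolding w_def by simp
    then have "(norm (z n - T l))\<^sup>2 = (norm (z n - l))\<^sup>2 + 2 * inner (z n - l) w + (norm w)\<^sup>2"
      by (simp only: power2_norm_eq_inner) (simp add: inner_add_left inner_add_right inner_commute)
    moreover have "inner (z n - l) w = inner (z n) w - inner l w"
      by (simp add: inner_diff_left)
    moreover have "(e n + norm (z n - l))\<^sup>2 = (e n)\<^sup>2 + 2 * e n * norm (z n - l) + (norm (z n - l))\<^sup>2"
      by (simp add: power2_eq_square algebra_simps)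
    moreover have "e n * norm (z n - l) \<le> e n * B"
      using norm_triangle_ineq4[of "z n" l] bd[of n] unfolding B_def e_def
      by (intro mult_left_mono) simp_all
    ultimately show ?thesis
      by (simp add: algebra_simps)
  qed
  have inner_lim: "(\<lambda>n. inner (z n) w) \<longlonglongrightarrow> inner l w"
    using weak unfolding weakly_converges_def by simp
  have e_lim: "e \<longlonglongrightarrow> 0"
    using reg unfolding e_def .
  have "(\<lambda>n. (e n)\<^sup>2 + 2 * B * e n - 2 * (inner (z n) w - inner l w)) \<longlonglongrightarrow>
      0\<^sup>2 + 2 * B * 0 - 2 * (inner l w - inner l w)"
    by (intro tendsto_intros inner_lim e_lim)
  then have "(\<lambda>n. (e n)\<^sup>2 + 2 * B * e n - 2 * (inner (z n) w - inner l w)) \<longlonglongrightarrow> 0"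
    by simp
  from LIMSEQ_le_const[OF this] key have "(norm w)\<^sup>2 \<le> 0"
    by blast
  then show ?thesis
    unfolding w_def by simp
qed

lemma weak_subseq_limits_unique_Opial:
  fixes x :: "nat \<Rightarrow> 'a::real_inner"
  assumes conv: "\<And>q. q \<in> F \<Longrightarrow> convergent (\<lambda>n. norm (x n - q))"
    and "l1 \<in> F" "l2 \<in> F"
    and \<phi>1: "strict_mono \<phi>1" "weakly_converges (x \<circ> \<phi>1) l1"
    and \<phi>2: "strict_mono \<phi>2" "weakly_converges (x \<circ> \<phi>2) l2"
  shows "l1 = l2"
proof -
  \<comment> \<open>inner (x n) (l1 - l2) is an affine combination of the convergent squared distances\<close>
  have eq: "inner (x n) (l1 - l2) =
      ((norm (x n - l2))\<^sup>2 - (norm (x n - l1))\<^sup>2 - (norm l2)\<^sup>2 + (norm l1)\<^sup>2) / 2" for n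
    by (simp only: power2_norm_eq_inner) (simp add: inner_diff_left inner_diff_right inner_commute algebra_simps)
  obtain c1 c2 where c1: "(\<lambda>n. norm (x n - l1)) \<longlonglongrightarrow> c1" and c2: "(\<lambda>n. norm (x n - l2)) \<longlonglongrightarrow> c2"
    using conv \<open>l1 \<in> F\<close> \<open>l2 \<in> F\<close> convergent_def by metis
  have c: "(\<lambda>n. inner (x n) (l1 - l2)) \<longlonglongrightarrow> (c2\<^sup>2 - c1\<^sup>2 - (norm l2)\<^sup>2 + (norm l1)\<^sup>2) / 2"
    unfolding eq by (intro tendsto_intros c1 c2) simp
  have "(\<lambda>n. inner (x (\<phi>1 n)) (l1 - l2)) \<longlonglongrightarrow> inner l1 (l1 - l2)"
    "(\<lambda>n. inner (x (\<phi>2 n)) (l1 - l2)) \<longlonglongrightarrow> inner l2 (l1 - l2)"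
    using \<phi>1(2) \<phi>2(2) unfolding weakly_converges_def by simp_all
  then have "inner l1 (l1 - l2) = inner l2 (l1 - l2)"
    using LIMSEQ_subseq_LIMSEQ[OF c \<phi>1(1)] LIMSEQ_subseq_LIMSEQ[OF c \<phi>2(1)] LIMSEQ_unique
    unfolding o_def by metis
  then have "inner (l1 - l2) (l1 - l2) = 0"
    by (simp add: inner_diff_left)
  then show ?thesis
    by simp
qed

lemma nonexpansive_iteration_dist_Fix_decreasing:
  assumes ne: "nonexpansive T" and iter: "\<And>n. x (Suc n) = T (x n)" and "z \<in> Fix T"
  shows "norm (x (Suc n) - z) \<le> norm (x n - z)" and "norm (x n - z) \<le> norm (x 0 - z)"
proof -
  have "T z = z"
    using \<open>z \<in> Fix T\<close> unfolding Fix_def by simp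
  then have dec: "norm (x (Suc m) - z) \<le> norm (x m - z)" for m
    using ne iter[of m] unfolding nonexpansive_def by metis
  then show "norm (x (Suc n) - z) \<le> norm (x n - z)" .
  show "norm (x n - z) \<le> norm (x 0 - z)"
    by (induction n) (use dec order.trans in auto)
qed

lemma nonexpansive_iteration_weakly_converges:
  fixes x :: "nat \<Rightarrow> 'a::{real_inner,complete_space}"
  assumes ne: "nonexpansive T" and iter: "\<And>n. x (Suc n) = T (x n)" and "Fix T \<noteq> {}"
    and reg: "(\<lambda>n. norm (x n - T (x n))) \<longlonglongrightarrow> 0"
  shows "\<exists>l\<in>Fix T. weakly_converges x l"
proof -
  note dec = nonexpansive_iteration_dist_Fix_decreasing(1)[where T = T and x = x, OF ne iter]
  note bd_dist = nonexpansive_iteration_dist_Fix_decreasing(2)[where T = T and x = x, OF ne iter]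
  have conv: "convergent (\<lambda>n. norm (x n - q))" if "q \<in> Fix T" for q
  proof (rule Bseq_monoseq_convergent)
    show "Bseq (\<lambda>n. norm (x n - q))"
      using bd_dist[OF that] by (intro BseqI') simp
    have "decseq (\<lambda>n. norm (x n - q))"
      using dec[OF that] by (intro decseq_SucI)
    then show "monoseq (\<lambda>n. norm (x n - q))"
      by (simp add: monoseq_iff)
  qed
  obtain z where "z \<in> Fix T"
    using \<open>Fix T \<noteq> {}\<close> by blast
  define M where "M = norm (x 0 - z) + norm z"
  have bd: "norm (x n) \<le> M" for n
    using bd_dist[OF \<open>z \<in> Fix T\<close>, of n] norm_triangle_ineq2[of "x n" z] unfolding M_def by linarith
  have cluster: "l \<in> Fix T" if "strict_mono \<phi>" "weakly_converges (x \<circ> \<phi>) l" for \<phi> l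
  proof -
    have "(\<lambda>n. norm ((x \<circ> \<phi>) n - T ((x \<circ> \<phi>) n))) \<longlonglongrightarrow> 0"
      using LIMSEQ_subseq_LIMSEQ[OF reg that(1)] by (simp add: o_def)
    then have "T l = l"
      using nonexpansive_weak_limit_fixed[OF ne _ that(2), of M] bd by simp
    then show ?thesis
      unfolding Fix_def by simp
  qed
  obtain \<phi> l where \<phi>: "strict_mono \<phi>" "weakly_converges (x \<circ> \<phi>) l"
    using weakly_convergent_subseq[of x M, OF bd] by blast
  have "weakly_converges x l"
  proof (rule weakly_converges_if_subseq_limits_unique[of x M, OF bd])
    fix \<psi> l' assume "strict_mono \<psi>" "weakly_converges (x \<circ> \<psi>) l'"
    then show "l' = l"
      using weak_subseq_limits_unique_Opial[OF conv cluster[OF \<open>strict_mono \<psi>\<close>] cluster[OF \<phi>]] \<phi>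
      by blast
  qed
  then show ?thesis
    using cluster[OF \<phi>] by blast
qed

lemma summable_decseq_real_mult_tendsto_zero:
  fixes b :: "nat \<Rightarrow> real"
  assumes nonneg: "\<And>n. b n \<ge> 0" and dec: "\<And>n. b (Suc n) \<le> b n" and "summable b"
  shows "(\<lambda>n. real n * b n) \<longlonglongrightarrow> 0"
  unfolding LIMSEQ_iff
proof (intro allI impI)
  fix e :: real assume "e > 0"
  then obtain N where N: "\<And>m n. m \<ge> N \<Longrightarrow> norm (sum b {m..<n}) < e / 2"
    using \<open>summable b\<close> unfolding summable_Cauchy by (meson half_gt_zero)
  have "norm (real n * b n - 0) < e" if "2 * N \<le> n" for n
  proof -
    \<comment> \<open>the second half of the first n terms dominates (n/2) b n\<close>
    define m where "m = n div 2"
    have "real (card {m..<n}) * b n \<le> sum b {m..<n}"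
      by (rule sum_bounded_below) (use lift_Suc_antimono_le[of b, OF dec] in auto)
    also have "\<dots> < e / 2"
      using N[of m n] that nonneg unfolding m_def by (simp add: sum_nonneg)
    finally have "real (n - m) * b n < e / 2"
      by simp
    moreover have "real n * b n \<le> 2 * real (n - m) * b n"
      using nonneg[of n] unfolding m_def by (intro mult_right_mono) linarith+
    ultimately show ?thesis
      using nonneg[of n] by simp
  qed
  then show "\<exists>no. \<forall>n\<ge>no. norm (real n * b n - 0) < e"
    by blast
qed

lemma nonexpansive_iteration_residual_little_o:
  fixes x :: "nat \<Rightarrow> 'a::real_normed_vector"
  assumes ne: "nonexpansive T" and iter: "\<And>n. x (Suc n) = T (x n)"
    and sum: "summable (\<lambda>n. (norm (x n - T (x n)))\<^sup>2)"
  shows "(\<lambda>n. norm (x n - T (x n))) \<in> o(\<lambda>n. 1 / sqrt (real n))"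
proof (rule smalloI_tendsto)
  have "norm (x (Suc n) - T (x (Suc n))) \<le> norm (x n - T (x n))" for n
    using ne iter[of n] unfolding nonexpansive_def by (metis norm_minus_commute)
  then have "(\<lambda>n. real n * (norm (x n - T (x n)))\<^sup>2) \<longlonglongrightarrow> 0"
    by (intro summable_decseq_real_mult_tendsto_zero sum) (simp_all add: power_mono)
  from tendsto_real_sqrt[OF this]
  show "((\<lambda>n. norm (x n - T (x n)) / (1 / sqrt (real n))) \<longlongrightarrow> 0) at_top"
    by (simp add: real_sqrt_mult mult.commute)
  show "\<forall>\<^sub>F n in at_top. 1 / sqrt (real n) \<noteq> 0"
    using eventually_gt_at_top[of "0::nat"] by (auto elim: eventually_mono)
qed

section \<open>Cocoercive operators and forward steps\<close>

lemma cocoercive_lipschitz: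
  assumes "cocoercive \<sigma> T"
  shows "\<sigma> * norm (T u - T v) \<le> norm (u - v)"
proof (cases "T u = T v")
  case False
  have "\<sigma> * (norm (T u - T v))\<^sup>2 \<le> inner (u - v) (T u - T v)"
    using assms unfolding cocoercive_def by blast
  also have "\<dots> \<le> norm (u - v) * norm (T u - T v)"
    using Cauchy_Schwarz_ineq2[of "u - v" "T u - T v"] by linarith
  finally have "\<sigma> * (norm (T u - T v))\<^sup>2 \<le> norm (u - v) * norm (T u - T v)" .
  then show ?thesis
    using False by (simp add: power2_eq_square mult.assoc mult_le_cancel_right)
qed (use assms in \<open>simp add: cocoercive_def\<close>)

lemma forward_step_descent:
  fixes R :: "'a::real_inner \<Rightarrow> 'a"
  assumes "\<eta> \<ge> 0" and coc: "inner (u - v) (R u - R v) \<ge> \<beta> * (norm (R u - R v))\<^sup>2 + g"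
  shows "(norm ((u - \<eta> *\<^sub>R R u) - (v - \<eta> *\<^sub>R R v)))\<^sup>2 + \<eta> * (2 * \<beta> - \<eta>) * (norm (R u - R v))\<^sup>2
      + 2 * \<eta> * g \<le> (norm (u - v))\<^sup>2"
proof -
  have "(u - \<eta> *\<^sub>R R u) - (v - \<eta> *\<^sub>R R v) = (u - v) - \<eta> *\<^sub>R (R u - R v)"
    by (simp add: algebra_simps)
  then have "(norm ((u - \<eta> *\<^sub>R R u) - (v - \<eta> *\<^sub>R R v)))\<^sup>2
      = (norm (u - v))\<^sup>2 - 2 * \<eta> * inner (u - v) (R u - R v) + \<eta>\<^sup>2 * (norm (R u - R v))\<^sup>2"
    by (simp only: power2_norm_eq_inner)
      (simp add: inner_diff_left inner_diff_right inner_commute algebra_simps power2_eq_square)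
  moreover have "\<eta> * inner (u - v) (R u - R v) \<ge> \<eta> * (\<beta> * (norm (R u - R v))\<^sup>2 + g)"
    using mult_left_mono[OF coc \<open>\<eta> \<ge> 0\<close>] .
  ultimately show ?thesis
    by (simp add: algebra_simps power2_eq_square)
qed

lemma averaged_forward_step:
  fixes R :: "'a::real_inner \<Rightarrow> 'a"
  assumes coc: "\<And>u v. inner (u - v) (R u - R v) \<ge> \<beta> * (norm (R u - R v))\<^sup>2"
    and "0 < \<eta>" "\<eta> < 2 * \<beta>"
  shows "averaged (\<eta> / (2 * \<beta>)) (\<lambda>z. z - \<eta> *\<^sub>R R z)"
  unfolding averaged_def
proof (intro conjI exI)
  show "0 < \<eta> / (2 * \<beta>)" "\<eta> / (2 * \<beta>) < 1"
    using assms(2,3) by simp_all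
  define N where "N z = z - (2 * \<beta>) *\<^sub>R R z" for z
  have "(norm (N u - N v))\<^sup>2 \<le> (norm (u - v))\<^sup>2" for u v
    using forward_step_descent[where \<eta> = "2 * \<beta>" and \<beta> = \<beta> and g = 0 and R = R] coc assms
    unfolding N_def by simp
  then show "nonexpansive N"
    unfolding nonexpansive_def by (simp add: power2_le_iff_abs_le)
  show "\<forall>z. z - \<eta> *\<^sub>R R z = (1 - \<eta> / (2 * \<beta>)) *\<^sub>R z + (\<eta> / (2 * \<beta>)) *\<^sub>R N z"
    using assms(2,3) by (simp add: N_def algebra_simps)
qed

lemma averaged_imp_nonexpansive:
  assumes "averaged \<theta> T"
  shows "nonexpansive T"
proof -
  obtain N where "0 < \<theta>" "\<theta> < 1" "nonexpansive N" and T: "\<And>z. T z = (1 - \<theta>) *\<^sub>R z + \<theta> *\<^sub>R N z"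
    using assms unfolding averaged_def by blast
  have "norm (T u - T v) \<le> norm (u - v)" for u v
  proof -
    have "T u - T v = (1 - \<theta>) *\<^sub>R (u - v) + \<theta> *\<^sub>R (N u - N v)"
      unfolding T by (simp add: algebra_simps)
    then have "norm (T u - T v) \<le> (1 - \<theta>) * norm (u - v) + \<theta> * norm (N u - N v)"
      using norm_triangle_ineq[of "(1 - \<theta>) *\<^sub>R (u - v)" "\<theta> *\<^sub>R (N u - N v)"] \<open>0 < \<theta>\<close> \<open>\<theta> < 1\<close>
      by simp
    also have "\<dots> \<le> norm (u - v)"
      using \<open>nonexpansive N\<close> \<open>0 < \<theta>\<close> mult_left_mono[of "norm (N u - N v)" "norm (u - v)" \<theta>]
      unfolding nonexpansive_def by (simp add: algebra_simps)
    finally show ?thesis .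
  qed
  then show ?thesis
    unfolding nonexpansive_def by blast
qed

text \<open>Sum-of-squares certificates for three_cocoercive_combination, in terms of the inner
  products ua = <u,a>, ab = <a,b>, ... and t = 1 / (2 \<sigma>3).\<close>

lemma sum_of_squares_certificate_a:
  fixes \<nu> \<sigma>1 \<sigma>2 \<sigma>3 lam \<delta> E t ua ub aa ab bb ac bc cc :: real
  assumes "lam = 2 * \<nu> * \<sigma>1" "lam = 2 * \<sigma>2" "2 * \<sigma>3 * t = 1" "E = lam - \<delta> * t"
  shows "\<nu> * (ua - ub) - ((E / 2) * (aa - 2 * ab + bb)
      + \<delta> * \<sigma>3 * (cc - 2 * t * (ac - bc) + t\<^sup>2 * (aa - 2 * ab + bb)))
    = \<nu> * (ua - \<sigma>1 * aa) + (- \<nu> * ub + lam * ab - \<delta> * bc - \<sigma>2 * bb) + \<delta> * (ac - \<sigma>3 * cc)"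
  using assms by algebra

lemma sum_of_squares_certificate_b:
  fixes \<nu> \<sigma>1 \<sigma>2 \<sigma>3 lam \<delta> E D k t ua ub aa ab bb ac bc cc :: real
  assumes "D = \<nu> * \<sigma>1 + \<sigma>2 - lam" "2 * D * k = 2 * \<nu> * \<sigma>1 - lam" "2 * \<sigma>3 * t = 1"
    "E = k * (2 * \<sigma>2 - lam) + lam - \<delta> * t"
  shows "\<nu> * (ua - ub) - ((E / 2) * (aa - 2 * ab + bb)
      + \<delta> * \<sigma>3 * (cc - 2 * t * (ac - bc) + t\<^sup>2 * (aa - 2 * ab + bb))
      + D * (bb + 2 * k * (ab - bb) + k\<^sup>2 * (aa - 2 * ab + bb)))
    = \<nu> * (ua - \<sigma>1 * aa) + (- \<nu> * ub + lam * ab - \<delta> * bc - \<sigma>2 * bb) + \<delta> * (ac - \<sigma>3 * cc)"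
  using assms by algebra

lemma three_cocoercive_combination:
  fixes u a b c :: "'a::real_inner"
  assumes h1: "inner u a \<ge> \<sigma>1 * (norm a)\<^sup>2"
    and h2: "inner (- \<nu> *\<^sub>R u + lam *\<^sub>R a - \<delta> *\<^sub>R c) b \<ge> \<sigma>2 * (norm b)\<^sup>2"
    and h3: "inner a c \<ge> \<sigma>3 * (norm c)\<^sup>2"
    and pos: "\<sigma>3 > 0" "\<nu> > 0" "\<delta> > 0"
    and regime: "(lam = 2 * \<nu> * \<sigma>1 \<and> lam = 2 * \<sigma>2 \<and>
                  \<eta>s = (1 / \<nu>) * (lam - \<delta> / (2 * \<sigma>3)))
              \<or> (lam < \<nu> * \<sigma>1 + \<sigma>2 \<and>
                  \<eta>s = (1 / \<nu>) * ((2 * \<nu> * \<sigma>1 - lam) * (2 * \<sigma>2 - lam)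
                          / (2 * (\<nu> * \<sigma>1 + \<sigma>2 - lam)) + lam - \<delta> / (2 * \<sigma>3)))"
  shows "\<nu> * inner u (a - b) \<ge> (\<nu> * \<eta>s / 2) * (norm (a - b))\<^sup>2
     + \<delta> * \<sigma>3 * (norm (c - (1 / (2 * \<sigma>3)) *\<^sub>R (a - b)))\<^sup>2
     + (if lam < \<nu> * \<sigma>1 + \<sigma>2 then (\<nu> * \<sigma>1 + \<sigma>2 - lam) *
          (norm (b + ((2 * \<nu> * \<sigma>1 - lam) / (2 * (\<nu> * \<sigma>1 + \<sigma>2 - lam))) *\<^sub>R (a - b)))\<^sup>2 else 0)"
proof -
  define t where "t = 1 / (2 * \<sigma>3)"
  have t: "2 * \<sigma>3 * t = 1"
    unfolding t_def using pos by simp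
  have expand:
    "inner u (a - b) = inner u a - inner u b"
    "(norm (a - b))\<^sup>2 = inner a a - 2 * inner a b + inner b b"
    "(norm (c - t *\<^sub>R (a - b)))\<^sup>2
       = inner c c - 2 * t * (inner a c - inner b c) + t\<^sup>2 * (inner a a - 2 * inner a b + inner b b)"
    "\<And>k. (norm (b + k *\<^sub>R (a - b)))\<^sup>2
       = inner b b + 2 * k * (inner a b - inner b b) + k\<^sup>2 * (inner a a - 2 * inner a b + inner b b)"
    by (simp_all only: power2_norm_eq_inner)
      (simp_all add: inner_diff_left inner_diff_right inner_add_left inner_add_right inner_commute
        algebra_simps power2_eq_square)
  have slack1: "\<nu> * (inner u a - \<sigma>1 * inner a a) \<ge> 0"
    using h1 pos by (simp add: power2_norm_eq_inner)
  have slack2: "- \<nu> * inner u b + lam * inner a b - \<delta> * inner b c - \<sigma>2 * inner b b \<ge> 0"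
    using h2 by (simp add: power2_norm_eq_inner inner_diff_left inner_add_left inner_diff_right
        inner_add_right inner_commute)
  have slack3: "\<delta> * (inner a c - \<sigma>3 * inner c c) \<ge> 0"
    using h3 pos by (simp add: power2_norm_eq_inner)
  show ?thesis
  proof (cases "lam < \<nu> * \<sigma>1 + \<sigma>2")
    case True
    define D where "D = \<nu> * \<sigma>1 + \<sigma>2 - lam"
    define k where "k = (2 * \<nu> * \<sigma>1 - lam) / (2 * D)"
    have "D > 0"
      using True unfolding D_def by simp
    then have k: "2 * D * k = 2 * \<nu> * \<sigma>1 - lam"
      unfolding k_def by simp
    have "\<nu> * \<eta>s = k * (2 * \<sigma>2 - lam) + lam - \<delta> * t"
      using regime True pos unfolding D_def k_def t_def by auto
    from sum_of_squares_certificate_b[OF D_def k t this, where ua = "inner u a" and ub = "inner u b" and aa = "inner a a" and ab = "inner a b"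
        and bb = "inner b b" and ac = "inner a c" and bc = "inner b c" and cc = "inner c c"] show ?thesis
      using True slack1 slack2 slack3 unfolding expand t_def[symmetric] D_def[symmetric] k_def[symmetric]
      by simp
  next
    case False
    then have "lam = 2 * \<nu> * \<sigma>1" "lam = 2 * \<sigma>2" "\<nu> * \<eta>s = lam - \<delta> * t"
      using regime pos unfolding t_def by (auto simp: field_simps)
    from sum_of_squares_certificate_a[OF this(1,2) t this(3), where ua = "inner u a" and ub = "inner u b" and aa = "inner a a" and ab = "inner a b"
        and bb = "inner b b" and ac = "inner a c" and bc = "inner b c" and cc = "inner c c"] show ?thesis
      using False slack1 slack2 slack3 unfolding expand t_def[symmetric]
      by simp
  qed
qed

lemma cocoercive_slacks_identity_a:
  fixes w e g r A B :: "'a::real_inner"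
  shows "\<nu> * inner w (e + A) - (lam / 2) * (norm (e + A))\<^sup>2
      + (inner (- \<nu> *\<^sub>R w + lam *\<^sub>R e - \<delta> *\<^sub>R g) (e - r + B) - (lam / 2) * (norm (e - r + B))\<^sup>2)
    = - (lam / 2) * ((norm A)\<^sup>2 + (norm B)\<^sup>2)
      + (\<nu> * inner w A - lam * inner e A + \<nu> * inner w r - \<nu> * inner w B
         - \<delta> * inner g (e - r + B) - (lam / 2) * (norm r)\<^sup>2 + lam * inner r B)"
  by (simp only: power2_norm_eq_inner)
    (simp add: inner_add_left inner_add_right inner_diff_left inner_diff_right inner_commute algebra_simps)

lemma cocoercive_slacks_limit_zero:
  fixes w e r g :: "nat \<Rightarrow> 'a::real_inner" and A B :: 'a
  assumes weak: "weakly_converges w 0" "weakly_converges e 0"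
    and bd: "\<And>k. norm (w k) \<le> M" "\<And>k. norm (e k) \<le> M"
    and lim: "r \<longlonglongrightarrow> 0" "g \<longlonglongrightarrow> 0" and "lam > 0"
    and slack: "\<And>k. \<nu> * inner (w k) (e k + A) - (lam / 2) * (norm (e k + A))\<^sup>2
      + (inner (- \<nu> *\<^sub>R w k + lam *\<^sub>R e k - \<delta> *\<^sub>R g k) (e k - r k + B)
         - (lam / 2) * (norm (e k - r k + B))\<^sup>2) \<ge> 0"
  shows "A = 0"
proof -
  define \<epsilon> where "\<epsilon> k = \<nu> * inner (w k) A - lam * inner (e k) A + \<nu> * inner (w k) (r k)
    - \<nu> * inner (w k) B - \<delta> * inner (g k) (e k - r k + B) - (lam / 2) * (norm (r k))\<^sup>2
    + lam * inner (r k) B" for k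
  define K where "K = - (lam / 2) * ((norm A)\<^sup>2 + (norm B)\<^sup>2)"
  have slack_eq: "K + \<epsilon> k \<ge> 0" for k
    using slack[of k] unfolding K_def \<epsilon>_def cocoercive_slacks_identity_a .
  have "\<epsilon> \<longlonglongrightarrow> 0"
  proof -
    have inner_weak: "(\<lambda>k. inner (w k) v) \<longlonglongrightarrow> 0" "(\<lambda>k. inner (e k) v) \<longlonglongrightarrow> 0" for v
      using weak unfolding weakly_converges_def by simp_all
    have "norm (e k + B) \<le> M + norm B" for k
      using bd(2)[of k] norm_triangle_ineq[of "e k" B] by linarith
    from tendsto_diff[OF bounded_inner_tendsto_zero[of "\<lambda>k. e k + B", OF this lim(2)]
        tendsto_inner[OF lim(2) lim(1)]]
    have "(\<lambda>k. inner (e k + B) (g k) - inner (g k) (r k)) \<longlonglongrightarrow> 0"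
      by simp
    moreover have "inner (g k) (e k - r k + B) = inner (e k + B) (g k) - inner (g k) (r k)" for k
      by (simp add: inner_add_left inner_add_right inner_diff_right inner_commute)
    ultimately have g_term: "(\<lambda>k. inner (g k) (e k - r k + B)) \<longlonglongrightarrow> 0"
      by simp
    have "\<epsilon> \<longlonglongrightarrow> \<nu> * 0 - lam * 0 + \<nu> * 0 - \<nu> * 0 - \<delta> * 0 - (lam / 2) * (norm (0::'a))\<^sup>2
        + lam * inner 0 B"
      unfolding \<epsilon>_def
      by (intro tendsto_intros inner_weak g_term bounded_inner_tendsto_zero[OF bd(1) lim(1)] lim)
    then show ?thesis
      by simp
  qed
  then have "(\<lambda>k. K + \<epsilon> k) \<longlonglongrightarrow> K + 0"
    by (intro tendsto_add tendsto_const)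
  from LIMSEQ_le_const[OF this] slack_eq have "K \<ge> 0"
    by simp
  then have "(norm A)\<^sup>2 + (norm B)\<^sup>2 \<le> 0"
    using \<open>lam > 0\<close> unfolding K_def by (simp add: mult_le_0_iff)
  then show ?thesis
    by (smt (verit) zero_le_power2 zero_less_norm_iff zero_less_power2)
qed

section \<open>The three-operator scheme\<close>

lemma image_eq_singleton_if_constant:
  assumes "a \<in> A" "\<And>b. b \<in> A \<Longrightarrow> f b = f a"
  shows "f ` A = {f a}"
proof
  show "f ` A \<subseteq> {f a}"
    using assms(2) by blast
  show "{f a} \<subseteq> f ` A"
    using assms(1) by blast
qed

locale three_operator_scheme =
  fixes T1 T2 T3 :: "'a::{real_inner, complete_space} \<Rightarrow> 'a"
    and \<sigma>1 \<sigma>2 \<sigma>3 \<eta> \<nu> lam \<delta> \<eta>s :: real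
    and S T :: "'a \<Rightarrow> 'a"
  assumes coc1: "cocoercive \<sigma>1 T1" and coc2: "cocoercive \<sigma>2 T2" and coc3: "cocoercive \<sigma>3 T3"
    and pos: "\<eta> > 0" "\<nu> > 0" "lam > 0" "\<delta> > 0"
    and S_def: "S = (\<lambda>z. - \<nu> *\<^sub>R z + lam *\<^sub>R T1 z - \<delta> *\<^sub>R T3 (T1 z))"
    and T_def: "T = (\<lambda>z. z - \<eta> *\<^sub>R T1 z + \<eta> *\<^sub>R T2 (S z))"
    and regime: "(lam = 2 * \<nu> * \<sigma>1 \<and> lam = 2 * \<sigma>2 \<and>
                  \<eta>s = (1 / \<nu>) * (lam - \<delta> / (2 * \<sigma>3)))
              \<or> (lam < \<nu> * \<sigma>1 + \<sigma>2 \<and>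
                  \<eta>s = (1 / \<nu>) * ((2 * \<nu> * \<sigma>1 - lam) * (2 * \<sigma>2 - lam)
                          / (2 * (\<nu> * \<sigma>1 + \<sigma>2 - lam)) + lam - \<delta> / (2 * \<sigma>3)))"
    and eta_lt: "\<eta> < \<eta>s"
begin

definition residual :: "'a \<Rightarrow> 'a" where
  "residual z = T1 z - T2 (S z)"

text \<open>The two squares in the key estimate residual_ineq; the second is only available in regime (b).\<close>

definition gap3 :: "'a \<Rightarrow> 'a \<Rightarrow> real" where
  "gap3 u v = \<delta> * \<sigma>3 *
     (norm ((T3 (T1 u) - T3 (T1 v)) - (1 / (2 * \<sigma>3)) *\<^sub>R (residual u - residual v)))\<^sup>2"

definition gap2 :: "'a \<Rightarrow> 'a \<Rightarrow> real" where
  "gap2 u v = (if lam < \<nu> * \<sigma>1 + \<sigma>2 then (\<nu> * \<sigma>1 + \<sigma>2 - lam) *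
     (norm ((T2 (S u) - T2 (S v)) + ((2 * \<nu> * \<sigma>1 - lam) / (2 * (\<nu> * \<sigma>1 + \<sigma>2 - lam))) *\<^sub>R
       (residual u - residual v)))\<^sup>2 else 0)"

lemma \<sigma>_pos: "\<sigma>1 > 0" "\<sigma>2 > 0" "\<sigma>3 > 0"
  using coc1 coc2 coc3 unfolding cocoercive_def by simp_all

lemma T_eq: "T z = z - \<eta> *\<^sub>R residual z"
  unfolding T_def residual_def by (simp add: algebra_simps)

lemma Fix_T_iff: "z \<in> Fix T \<longleftrightarrow> residual z = 0"
  unfolding Fix_def T_eq using pos(1) by simp

lemma gap3_nonneg: "gap3 u v \<ge> 0"
  unfolding gap3_def using pos \<sigma>_pos by simp

lemma gap2_nonneg: "gap2 u v \<ge> 0"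
  unfolding gap2_def by simp

lemma residual_ineq:
  "inner (u - v) (residual u - residual v)
     \<ge> (\<eta>s / 2) * (norm (residual u - residual v))\<^sup>2 + (gap3 u v + gap2 u v) / \<nu>"
proof -
  have "S u - S v = - \<nu> *\<^sub>R (u - v) + lam *\<^sub>R (T1 u - T1 v) - \<delta> *\<^sub>R (T3 (T1 u) - T3 (T1 v))"
    unfolding S_def by (simp add: algebra_simps)
  then have T2_slack: "inner (- \<nu> *\<^sub>R (u - v) + lam *\<^sub>R (T1 u - T1 v) - \<delta> *\<^sub>R (T3 (T1 u) - T3 (T1 v)))
      (T2 (S u) - T2 (S v)) \<ge> \<sigma>2 * (norm (T2 (S u) - T2 (S v)))\<^sup>2"
    using coc2 unfolding cocoercive_def by metis
  have T1_slack: "inner (u - v) (T1 u - T1 v) \<ge> \<sigma>1 * (norm (T1 u - T1 v))\<^sup>2"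
    using coc1 unfolding cocoercive_def by blast
  have T3_slack: "inner (T1 u - T1 v) (T3 (T1 u) - T3 (T1 v)) \<ge> \<sigma>3 * (norm (T3 (T1 u) - T3 (T1 v)))\<^sup>2"
    using coc3 unfolding cocoercive_def by blast
  have diff_eq: "T1 u - T1 v - (T2 (S u) - T2 (S v)) = residual u - residual v"
    unfolding residual_def by simp
  from three_cocoercive_combination[OF T1_slack T2_slack T3_slack \<sigma>_pos(3) pos(2) pos(4) regime]
  have "\<nu> * inner (u - v) (residual u - residual v)
      \<ge> (\<nu> * \<eta>s / 2) * (norm (residual u - residual v))\<^sup>2 + gap3 u v + gap2 u v"
    unfolding diff_eq gap3_def gap2_def by linarith
  also have "(\<nu> * \<eta>s / 2) * (norm (residual u - residual v))\<^sup>2 + gap3 u v + gap2 u v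
      = \<nu> * ((\<eta>s / 2) * (norm (residual u - residual v))\<^sup>2 + (gap3 u v + gap2 u v) / \<nu>)"
    using pos(2) by (simp add: field_simps)
  finally show ?thesis
    using pos(2) by simp
qed

lemma residual_cocoercive:
  "inner (u - v) (residual u - residual v) \<ge> (\<eta>s / 2) * (norm (residual u - residual v))\<^sup>2"
  using residual_ineq[of u v] gap3_nonneg[of u v] gap2_nonneg[of u v] pos(2)
  by (smt (verit) divide_nonneg_pos)

lemma averaged_T: "averaged (\<eta> / \<eta>s) T"
  using averaged_forward_step[where R = residual and \<beta> = "\<eta>s / 2" and \<eta> = \<eta>]
    residual_cocoercive pos(1) eta_lt
  unfolding T_eq[abs_def] by simp

lemma nonexpansive_T: "nonexpansive T"
  using averaged_imp_nonexpansive[OF averaged_T] .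

lemma T_descent:
  "(norm (T u - T v))\<^sup>2 + \<eta> * (\<eta>s - \<eta>) * (norm (residual u - residual v))\<^sup>2
     + (2 * \<eta> / \<nu>) * (gap3 u v + gap2 u v) \<le> (norm (u - v))\<^sup>2"
  using forward_step_descent[where \<eta> = \<eta> and R = residual and \<beta> = "\<eta>s / 2"
      and g = "(gap3 u v + gap2 u v) / \<nu>", OF _ residual_ineq] pos(1)
  unfolding T_eq by simp

lemma gaps_vanish_on_Fix:
  assumes "u \<in> Fix T" "v \<in> Fix T"
  shows "gap3 u v = 0" "gap2 u v = 0"
  using residual_ineq[of u v] assms gap3_nonneg[of u v] gap2_nonneg[of u v] pos(2)
  unfolding Fix_T_iff by (simp_all add: add_nonneg_eq_0_iff divide_le_0_iff)

lemma T3T1_const_on_Fix: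
  assumes "u \<in> Fix T" "v \<in> Fix T"
  shows "T3 (T1 u) = T3 (T1 v)"
  using gaps_vanish_on_Fix[OF assms] assms pos(4) \<sigma>_pos(3) unfolding gap3_def Fix_T_iff by simp

lemma T2S_eq_T1_on_Fix:
  assumes "z \<in> Fix T"
  shows "T2 (S z) = T1 z"
  using assms unfolding Fix_T_iff residual_def by simp

lemma T1_const_on_Fix:
  assumes "lam < \<nu> * \<sigma>1 + \<sigma>2" "u \<in> Fix T" "v \<in> Fix T"
  shows "T1 u = T1 v"
proof -
  have "residual u = 0" "residual v = 0"
    using assms(2,3) Fix_T_iff by simp_all
  with gaps_vanish_on_Fix(2)[OF assms(2,3)] assms(1) have "T2 (S u) = T2 (S v)"
    unfolding gap2_def by simp
  then show ?thesis
    using T2S_eq_T1_on_Fix[OF assms(2)] T2S_eq_T1_on_Fix[OF assms(3)] by simp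
qed

lemma regime_a_slacks_nonneg:
  assumes "lam = 2 * \<nu> * \<sigma>1" "lam = 2 * \<sigma>2"
  shows "\<nu> * inner (u - v) (T1 u - T1 v) - (lam / 2) * (norm (T1 u - T1 v))\<^sup>2
    + (inner (S u - s) (T2 (S u) - T2 s) - (lam / 2) * (norm (T2 (S u) - T2 s))\<^sup>2) \<ge> 0"
proof -
  have "\<nu> * (\<sigma>1 * (norm (T1 u - T1 v))\<^sup>2) \<le> \<nu> * inner (u - v) (T1 u - T1 v)"
    using coc1 pos(2) unfolding cocoercive_def by (intro mult_left_mono) simp_all
  moreover have "\<sigma>2 * (norm (T2 (S u) - T2 s))\<^sup>2 \<le> inner (S u - s) (T2 (S u) - T2 s)"
    using coc2 unfolding cocoercive_def by blast
  moreover have "lam / 2 = \<nu> * \<sigma>1" "lam / 2 = \<sigma>2"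
    using assms by simp_all
  ultimately show ?thesis
    by (simp only: mult.assoc)
qed

lemma T3T1_image_Fix:
  assumes "xs \<in> Fix T"
  shows "(\<lambda>z. T3 (T1 z)) ` Fix T = {T3 (T1 xs)}"
  by (rule image_eq_singleton_if_constant[OF assms]) (rule T3T1_const_on_Fix[OF _ assms])

lemma T1_image_Fix:
  assumes "lam < \<nu> * \<sigma>1 + \<sigma>2" "xs \<in> Fix T"
  shows "T1 ` Fix T = {T1 xs}"
  by (rule image_eq_singleton_if_constant[OF assms(2)]) (rule T1_const_on_Fix[OF assms(1) _ assms(2)])

lemma T2S_image_Fix:
  assumes "lam < \<nu> * \<sigma>1 + \<sigma>2" "xs \<in> Fix T"
  shows "(\<lambda>z. T2 (S z)) ` Fix T = {T1 xs}"
proof -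
  have "T2 (S z) = T2 (S xs)" if "z \<in> Fix T" for z
    using T1_const_on_Fix[OF assms(1) that assms(2)] T2S_eq_T1_on_Fix[OF that]
      T2S_eq_T1_on_Fix[OF assms(2)] by simp
  then have "(\<lambda>z. T2 (S z)) ` Fix T = {T2 (S xs)}"
    by (rule image_eq_singleton_if_constant[OF assms(2)])
  then show ?thesis
    using T2S_eq_T1_on_Fix[OF assms(2)] by simp
qed

end

locale three_operator_iteration = three_operator_scheme +
  fixes x :: "nat \<Rightarrow> 'a"
  assumes iter: "\<And>n. x (Suc n) = T (x n)" and fix_ne: "Fix T \<noteq> {}"
begin

definition dissipation :: "'a \<Rightarrow> nat \<Rightarrow> real" where
  "dissipation z n = \<eta> * (\<eta>s - \<eta>) * (norm (residual (x n)))\<^sup>2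
     + (2 * \<eta> / \<nu>) * gap3 (x n) z + (2 * \<eta> / \<nu>) * gap2 (x n) z"

lemma dissipation_bounds:
  "0 \<le> dissipation z n"
  "\<eta> * (\<eta>s - \<eta>) * (norm (residual (x n)))\<^sup>2 \<le> dissipation z n"
  "(2 * \<eta> / \<nu>) * gap3 (x n) z \<le> dissipation z n"
  "(2 * \<eta> / \<nu>) * gap2 (x n) z \<le> dissipation z n"
proof -
  have "\<eta> * (\<eta>s - \<eta>) * (norm (residual (x n)))\<^sup>2 \<ge> 0"
    "(2 * \<eta> / \<nu>) * gap3 (x n) z \<ge> 0" "(2 * \<eta> / \<nu>) * gap2 (x n) z \<ge> 0"
    using pos eta_lt gap3_nonneg gap2_nonneg by simp_all
  then show "0 \<le> dissipation z n"
    "\<eta> * (\<eta>s - \<eta>) * (norm (residual (x n)))\<^sup>2 \<le> dissipation z n"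
    "(2 * \<eta> / \<nu>) * gap3 (x n) z \<le> dissipation z n"
    "(2 * \<eta> / \<nu>) * gap2 (x n) z \<le> dissipation z n"
    unfolding dissipation_def by linarith+
qed

lemma fejer_step:
  assumes "z \<in> Fix T"
  shows "(norm (x (Suc n) - z))\<^sup>2 + dissipation z n \<le> (norm (x n - z))\<^sup>2"
proof -
  have "residual z = 0" "T z = z"
    using assms Fix_T_iff unfolding Fix_def by auto
  then show ?thesis
    using T_descent[of "x n" z] iter[of n] unfolding dissipation_def by (simp add: algebra_simps)
qed

lemma dist_to_Fix_decreasing:
  assumes "z \<in> Fix T"
  shows "norm (x n - z) \<le> norm (x 0 - z)"
  using nonexpansive_iteration_dist_Fix_decreasing(2)[where T = T and x = x, OF nonexpansive_T iter assms] .

lemma summable_dissipation: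
  assumes "z \<in> Fix T"
  shows "summable (dissipation z)"
proof (rule summableI_nonneg_bounded)
  show "dissipation z n \<ge> 0" for n
    using dissipation_bounds(1) .
  have "(\<Sum>k<n. dissipation z k) \<le> (norm (x 0 - z))\<^sup>2 - (norm (x n - z))\<^sup>2" for n
  proof (induction n)
    case (Suc n)
    then show ?case
      using fejer_step[OF assms, of n] by simp
  qed simp
  then show "(\<Sum>k<n. dissipation z k) \<le> (norm (x 0 - z))\<^sup>2" for n
    by (smt (verit) zero_le_power2)
qed

lemma dissipation_tendsto_zero:
  assumes "z \<in> Fix T"
  shows "(\<lambda>n. (norm (residual (x n)))\<^sup>2) \<longlonglongrightarrow> 0"
    and "(\<lambda>n. gap3 (x n) z) \<longlonglongrightarrow> 0" and "(\<lambda>n. gap2 (x n) z) \<longlonglongrightarrow> 0"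
proof -
  have lim: "dissipation z \<longlonglongrightarrow> 0"
    using summable_LIMSEQ_zero[OF summable_dissipation[OF assms]] .
  have c: "\<eta> * (\<eta>s - \<eta>) > 0" "2 * \<eta> / \<nu> > 0"
    using pos eta_lt by simp_all
  show "(\<lambda>n. (norm (residual (x n)))\<^sup>2) \<longlonglongrightarrow> 0"
    by (rule tendsto_zero_if_nonneg_scaled_le[OF _ dissipation_bounds(2) c(1) lim]) simp
  show "(\<lambda>n. gap3 (x n) z) \<longlonglongrightarrow> 0"
    by (rule tendsto_zero_if_nonneg_scaled_le[OF gap3_nonneg dissipation_bounds(3) c(2) lim])
  show "(\<lambda>n. gap2 (x n) z) \<longlonglongrightarrow> 0"
    by (rule tendsto_zero_if_nonneg_scaled_le[OF gap2_nonneg dissipation_bounds(4) c(2) lim])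
qed

lemma residual_tendsto_zero: "(\<lambda>n. residual (x n)) \<longlonglongrightarrow> 0"
proof -
  obtain z where "z \<in> Fix T"
    using fix_ne by blast
  from tendsto_zero_if_norm_sq_tendsto_zero[OF dissipation_tendsto_zero(1)[OF this]] show ?thesis .
qed

lemma weakly_converges_to_Fix: "\<exists>xs\<in>Fix T. weakly_converges x xs"
proof (rule nonexpansive_iteration_weakly_converges[where T = T and x = x, OF nonexpansive_T iter fix_ne])
  have "(\<lambda>n. \<eta> *\<^sub>R residual (x n)) \<longlonglongrightarrow> \<eta> *\<^sub>R 0"
    by (intro tendsto_intros residual_tendsto_zero)
  then have "(\<lambda>n. x n - T (x n)) \<longlonglongrightarrow> 0"
    unfolding T_eq by simp
  then show "(\<lambda>n. norm (x n - T (x n))) \<longlonglongrightarrow> 0"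
    by (rule tendsto_norm_zero)
qed

lemma residual_little_o: "(\<lambda>n. norm (x n - T (x n))) \<in> o(\<lambda>n. 1 / sqrt (real n))"
proof (rule nonexpansive_iteration_residual_little_o[where T = T and x = x, OF nonexpansive_T iter])
  obtain z where "z \<in> Fix T"
    using fix_ne by blast
  show "summable (\<lambda>n. (norm (x n - T (x n)))\<^sup>2)"
  proof (rule summable_comparison_test'[OF summable_mult[OF summable_dissipation[OF \<open>z \<in> Fix T\<close>]]])
    fix n
    have "(norm (x n - T (x n)))\<^sup>2 = \<eta>\<^sup>2 * (norm (residual (x n)))\<^sup>2"
      unfolding T_eq using pos(1) by (simp add: power_mult_distrib)
    also have "\<dots> = (\<eta> / (\<eta>s - \<eta>)) * (\<eta> * (\<eta>s - \<eta>) * (norm (residual (x n)))\<^sup>2)"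
      using eta_lt by (simp add: field_simps power2_eq_square)
    also have "\<dots> \<le> (\<eta> / (\<eta>s - \<eta>)) * dissipation z n"
      using dissipation_bounds(2)[of n z] pos(1) eta_lt by (intro mult_left_mono) simp_all
    finally show "norm ((norm (x n - T (x n)))\<^sup>2) \<le> (\<eta> / (\<eta>s - \<eta>)) * dissipation z n"
      by simp
  qed
qed

lemma T3T1_tendsto:
  assumes "xs \<in> Fix T"
  shows "(\<lambda>n. T3 (T1 (x n))) \<longlonglongrightarrow> T3 (T1 xs)"
proof -
  define t where "t = 1 / (2 * \<sigma>3)"
  define d where "d n = (T3 (T1 (x n)) - T3 (T1 xs)) - t *\<^sub>R residual (x n)" for n
  have "residual xs = 0"
    using assms Fix_T_iff by simp
  then have "\<delta> * \<sigma>3 * (norm (d n))\<^sup>2 = gap3 (x n) xs" for n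
    unfolding gap3_def d_def t_def by simp
  then have "(\<lambda>n. (norm (d n))\<^sup>2) \<longlonglongrightarrow> 0"
    using pos(4) \<sigma>_pos(3)
    by (intro tendsto_zero_if_nonneg_scaled_le[where c = "\<delta> * \<sigma>3",
        OF _ _ _ dissipation_tendsto_zero(2)[OF assms]]) simp_all
  then have "d \<longlonglongrightarrow> 0"
    by (rule tendsto_zero_if_norm_sq_tendsto_zero)
  then have "(\<lambda>n. d n + t *\<^sub>R residual (x n)) \<longlonglongrightarrow> 0 + t *\<^sub>R 0"
    by (intro tendsto_intros residual_tendsto_zero)
  then show ?thesis
    unfolding d_def by (simp add: LIM_zero_iff)
qed

lemma T2S_tendsto:
  assumes "lam < \<nu> * \<sigma>1 + \<sigma>2" "xs \<in> Fix T"
  shows "(\<lambda>n. T2 (S (x n))) \<longlonglongrightarrow> T2 (S xs)"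
proof -
  define k where "k = (2 * \<nu> * \<sigma>1 - lam) / (2 * (\<nu> * \<sigma>1 + \<sigma>2 - lam))"
  define d where "d n = (T2 (S (x n)) - T2 (S xs)) + k *\<^sub>R residual (x n)" for n
  have "residual xs = 0"
    using assms Fix_T_iff by simp
  then have "(\<nu> * \<sigma>1 + \<sigma>2 - lam) * (norm (d n))\<^sup>2 = gap2 (x n) xs" for n
    unfolding gap2_def d_def k_def using assms(1) by simp
  then have "(\<lambda>n. (norm (d n))\<^sup>2) \<longlonglongrightarrow> 0"
    using assms(1)
    by (intro tendsto_zero_if_nonneg_scaled_le[where c = "\<nu> * \<sigma>1 + \<sigma>2 - lam",
        OF _ _ _ dissipation_tendsto_zero(3)[OF assms(2)]]) simp_all
  then have "d \<longlonglongrightarrow> 0"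
    by (rule tendsto_zero_if_norm_sq_tendsto_zero)
  then have "(\<lambda>n. d n - k *\<^sub>R residual (x n)) \<longlonglongrightarrow> 0 - k *\<^sub>R 0"
    by (intro tendsto_intros residual_tendsto_zero)
  then show ?thesis
    unfolding d_def by (simp add: LIM_zero_iff)
qed

lemma T1_tendsto:
  assumes "lam < \<nu> * \<sigma>1 + \<sigma>2" "xs \<in> Fix T"
  shows "(\<lambda>n. T1 (x n)) \<longlonglongrightarrow> T1 xs"
proof -
  have "(\<lambda>n. T2 (S (x n)) + residual (x n)) \<longlonglongrightarrow> T2 (S xs) + 0"
    using tendsto_add[OF T2S_tendsto[OF assms] residual_tendsto_zero] .
  moreover have "T2 (S xs) = T1 xs"
    using assms(2) Fix_T_iff unfolding residual_def by simp
  ultimately show ?thesis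
    unfolding residual_def by simp
qed

lemma T1_iterates_bounded:
  assumes "z \<in> Fix T"
  shows "norm (T1 (x n)) \<le> norm (T1 z) + norm (x 0 - z) / \<sigma>1"
proof -
  have "\<sigma>1 * norm (T1 (x n) - T1 z) \<le> norm (x 0 - z)"
    using cocoercive_lipschitz[OF coc1, of "x n" z] dist_to_Fix_decreasing[OF assms, of n] by linarith
  then have "norm (T1 (x n) - T1 z) \<le> norm (x 0 - z) / \<sigma>1"
    using \<sigma>_pos(1) by (simp add: pos_le_divide_eq mult.commute)
  then show ?thesis
    using norm_triangle_ineq2[of "T1 (x n)" "T1 z"] by linarith
qed

lemma T1_weak_cluster_point:
  assumes a: "lam = 2 * \<nu> * \<sigma>1" "lam = 2 * \<sigma>2"
    and xs: "xs \<in> Fix T" "weakly_converges x xs"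
    and \<phi>: "strict_mono \<phi>" "weakly_converges ((\<lambda>n. T1 (x n)) \<circ> \<phi>) p"
  shows "p = T1 xs"
proof -
  define s where "s = - \<nu> *\<^sub>R xs + lam *\<^sub>R p - \<delta> *\<^sub>R T3 (T1 xs)"
  define w where "w k = x (\<phi> k) - xs" for k
  define e where "e k = T1 (x (\<phi> k)) - p" for k
  define r where "r k = residual (x (\<phi> k))" for k
  define g where "g k = T3 (T1 (x (\<phi> k))) - T3 (T1 xs)" for k
  define M where "M = norm (x 0 - xs) + norm (T1 xs) + norm (x 0 - xs) / \<sigma>1 + norm p"
  have "weakly_converges w 0"
    using weakly_converges_diff_limit[OF weakly_converges_subseq[OF xs(2) \<phi>(1)]]
    unfolding w_def o_def .
  moreover have "weakly_converges e 0"
    using weakly_converges_diff_limit[OF \<phi>(2)] unfolding e_def o_def .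
  moreover have "norm (w k) \<le> M" "norm (e k) \<le> M" for k
  proof -
    have "norm (x 0 - xs) / \<sigma>1 \<ge> 0"
      using \<sigma>_pos(1) by simp
    then show "norm (w k) \<le> M"
      using dist_to_Fix_decreasing[OF xs(1), of "\<phi> k"] norm_ge_zero[of "T1 xs"] norm_ge_zero[of p]
      unfolding M_def w_def by linarith
    show "norm (e k) \<le> M"
      using T1_iterates_bounded[OF xs(1), of "\<phi> k"] norm_triangle_ineq4[of "T1 (x (\<phi> k))" p]
        norm_ge_zero[of "x 0 - xs"]
      unfolding M_def e_def by linarith
  qed
  moreover have "r \<longlonglongrightarrow> 0"
    using LIMSEQ_subseq_LIMSEQ[OF residual_tendsto_zero \<phi>(1)] unfolding r_def o_def .
  moreover have "g \<longlonglongrightarrow> 0"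
    using LIMSEQ_subseq_LIMSEQ[OF T3T1_tendsto[OF xs(1)] \<phi>(1)] unfolding g_def o_def
    by (rule LIM_zero)
  moreover have "\<nu> * inner (w k) (e k + (p - T1 xs)) - (lam / 2) * (norm (e k + (p - T1 xs)))\<^sup>2
      + (inner (- \<nu> *\<^sub>R w k + lam *\<^sub>R e k - \<delta> *\<^sub>R g k) (e k - r k + (p - T2 s))
         - (lam / 2) * (norm (e k - r k + (p - T2 s)))\<^sup>2) \<ge> 0" for k
  proof -
    have eqs: "e k + (p - T1 xs) = T1 (x (\<phi> k)) - T1 xs"
      "e k - r k + (p - T2 s) = T2 (S (x (\<phi> k))) - T2 s"
      "- \<nu> *\<^sub>R w k + lam *\<^sub>R e k - \<delta> *\<^sub>R g k = S (x (\<phi> k)) - s"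
      unfolding e_def r_def w_def g_def residual_def by simp_all (simp add: S_def s_def algebra_simps)
    show ?thesis
      unfolding eqs unfolding w_def by (rule regime_a_slacks_nonneg[OF a])
  qed
  ultimately have "p - T1 xs = 0"
    by (rule cocoercive_slacks_limit_zero[OF _ _ _ _ _ _ pos(3)])
  then show ?thesis
    by simp
qed

lemma T1_weakly_converges:
  assumes "lam = 2 * \<nu> * \<sigma>1" "lam = 2 * \<sigma>2" "xs \<in> Fix T" "weakly_converges x xs"
  shows "weakly_converges (\<lambda>n. T1 (x n)) (T1 xs)"
  using weakly_converges_if_subseq_limits_unique[of "\<lambda>n. T1 (x n)", OF T1_iterates_bounded[OF assms(3)]]
    T1_weak_cluster_point[OF assms] by blast

lemma T2S_weakly_converges:
  assumes "lam = 2 * \<nu> * \<sigma>1" "lam = 2 * \<sigma>2" "xs \<in> Fix T" "weakly_converges x xs"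
  shows "weakly_converges (\<lambda>n. T2 (S (x n))) (T1 xs)"
  using weakly_converges_diff_tendsto_zero[OF T1_weakly_converges[OF assms] residual_tendsto_zero]
  unfolding residual_def by simp

end

theorem theorem3p3:
  fixes T1 T2 T3 :: "'a::{real_inner, complete_space} \<Rightarrow> 'a"
    and \<sigma>1 \<sigma>2 \<sigma>3 \<eta> \<nu> lam \<delta> \<eta>s :: real
    and S T :: "'a \<Rightarrow> 'a"
    and x :: "nat \<Rightarrow> 'a"
  assumes coc1: "cocoercive \<sigma>1 T1" and coc2: "cocoercive \<sigma>2 T2" and coc3: "cocoercive \<sigma>3 T3"
    and pos: "\<eta> > 0" "\<nu> > 0" "lam > 0" "\<delta> > 0"
    and S_def: "S = (\<lambda>z. - \<nu> *\<^sub>R z + lam *\<^sub>R T1 z - \<delta> *\<^sub>R T3 (T1 z))"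
    and T_def: "T = (\<lambda>z. z - \<eta> *\<^sub>R T1 z + \<eta> *\<^sub>R T2 (S z))"
    and fix_ne: "Fix T \<noteq> {}"
    and cases: "(lam = 2 * \<nu> * \<sigma>1 \<and> lam = 2 * \<sigma>2 \<and>
                  \<eta>s = (1 / \<nu>) * (lam - \<delta> / (2 * \<sigma>3)))
              \<or> (lam < \<nu> * \<sigma>1 + \<sigma>2 \<and>
                  \<eta>s = (1 / \<nu>) * ((2 * \<nu> * \<sigma>1 - lam) * (2 * \<sigma>2 - lam)
                          / (2 * (\<nu> * \<sigma>1 + \<sigma>2 - lam)) + lam - \<delta> / (2 * \<sigma>3)))"
    and eta_lt: "\<eta> < \<eta>s"
    and iter: "\<And>n. x (Suc n) = T (x n)"
  shows "averaged (\<eta> / \<eta>s) T \<and>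
    (\<exists>xs \<in> Fix T.
       weakly_converges x xs \<and>
       (\<lambda>n. norm (x n - T (x n))) \<in> o(\<lambda>n. 1 / sqrt (real n)) \<and>
       ((\<lambda>n. T3 (T1 (x n))) \<longlonglongrightarrow> T3 (T1 xs)) \<and>
       (\<lambda>z. T3 (T1 z)) ` Fix T = {T3 (T1 xs)} \<and>
       (lam = 2 * \<nu> * \<sigma>1 \<and> lam = 2 * \<sigma>2 \<and> \<nu> = lam - 1 \<longrightarrow>
          weakly_converges (\<lambda>n. T1 (x n)) (T1 xs) \<and>
          weakly_converges (\<lambda>n. T2 (S (x n))) (T1 xs) \<and>
          T1 xs = T2 (S xs)) \<and>
       (lam < \<nu> * \<sigma>1 + \<sigma>2 \<longrightarrow>
          ((\<lambda>n. T1 (x n)) \<longlonglongrightarrow> T1 xs) \<and>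
          ((\<lambda>n. T2 (S (x n))) \<longlonglongrightarrow> T1 xs) \<and>
          T1 xs = T2 (S xs) \<and>
          T1 ` Fix T = {T1 xs} \<and> (\<lambda>z. T2 (S z)) ` Fix T = {T1 xs}))"
proof -
  interpret three_operator_iteration T1 T2 T3 \<sigma>1 \<sigma>2 \<sigma>3 \<eta> \<nu> lam \<delta> \<eta>s S T x
    using assms by unfold_locales auto
  obtain xs where xs: "xs \<in> Fix T" "weakly_converges x xs"
    using weakly_converges_to_Fix by blast
  have T1_fix: "T1 xs = T2 (S xs)"
    using T2S_eq_T1_on_Fix[OF xs(1)] by simp
  have iii: "lam = 2 * \<nu> * \<sigma>1 \<and> lam = 2 * \<sigma>2 \<and> \<nu> = lam - 1 \<longrightarrow>
      weakly_converges (\<lambda>n. T1 (x n)) (T1 xs) \<and> weakly_converges (\<lambda>n. T2 (S (x n))) (T1 xs)"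
    using T1_weakly_converges[OF _ _ xs] T2S_weakly_converges[OF _ _ xs] by blast
  have iv: "lam < \<nu> * \<sigma>1 + \<sigma>2 \<longrightarrow>
      ((\<lambda>n. T1 (x n)) \<longlonglongrightarrow> T1 xs) \<and> ((\<lambda>n. T2 (S (x n))) \<longlonglongrightarrow> T1 xs) \<and>
      T1 ` Fix T = {T1 xs} \<and> (\<lambda>z. T2 (S z)) ` Fix T = {T1 xs}"
    using T1_tendsto[OF _ xs(1)] T2S_tendsto[OF _ xs(1)] T1_image_Fix[OF _ xs(1)]
      T2S_image_Fix[OF _ xs(1)] unfolding T1_fix by blast
  show ?thesis
    using averaged_T xs residual_little_o T3T1_tendsto[OF xs(1)] T3T1_image_Fix[OF xs(1)] T1_fix iii iv
    by blast
qed

end
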